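(* Let $p_1\le p_2\le\dots\le p_m$ be a probability distribution on $m$ urns, and let $C$ be the number of balls thrown independently into the urns according to this distribution until every urn contains at least one ball. Then, for large values of $m$, \[ \frac{1}{p_1}\le E[C]\le 2\,H_m\,\frac{1}{p_1}, \] where $H_m=\sum_{j=1}^m 1/j$. *)

theory Defs
  imports "HOL-Probability.Probability"
begin

text \<open>Urns are numbered 0,...,m-1 (urn i+1 of the paper is urn i here).\<close>

definition all_covered :: "nat \<Rightarrow> nat stream \<Rightarrow> nat \<Rightarrow> bool" where
  "all_covered m \<omega> n \<longleftrightarrow> (\<forall>i<m. \<exists>k<n. \<omega> !! k = i)"

definition cover_time :: "nat \<Rightarrow> nat stream \<Rightarrow> ennreal" where
  "cover_time m \<omega> =
     (if \<exists>n. all_covered m \<omega> n then of_nat (LEAST n. all_covered m \<omega> n) else \<infinity>)"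

definition expected_cover_time :: "nat \<Rightarrow> nat pmf \<Rightarrow> ennreal" where
  "expected_cover_time m P =
     (\<integral>\<^sup>+ \<omega>. cover_time m \<omega> \<partial>stream_space (measure_pmf P))"

end

theory Submission
  imports Defs
begin

text \<open>Urn i is still empty after n throws with probability (1 - p_i)^n. Since urn 1 must be
  filled, E[C] = \<Sum>_n Pr[C > n] \<ge> \<Sum>_n (1 - p_1)^n = 1/p_1. Conversely, by the union bound
  Pr[C > n] \<le> m (1 - p_1)^n, which is at most 1 once n \<ge> N = \<lceil>ln m / p_1\<rceil> and then decays
  geometrically; hence E[C] \<le> N + 1/p_1 \<le> (ln m + 2)/p_1 \<le> 2 H_m / p_1 as soon as ln m \<ge> 2.\<close>

abbreviation throws :: "'a pmf \<Rightarrow> 'a stream measure" where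
  "throws P \<equiv> stream_space (measure_pmf P)"

lemma prob_space_throws: "prob_space (throws P)"
  by (rule prob_space.prob_space_stream_space[OF prob_space_measure_pmf])

lemma sets_urn_empty: "{\<omega>. \<forall>k<n. \<omega> !! k \<noteq> i} \<in> sets (throws P)"
proof -
  have "Measurable.pred (throws P) (\<lambda>\<omega>. \<forall>k<n. \<omega> !! k \<noteq> i)"
    by measurable
  then show ?thesis
    by (simp add: pred_def space_stream_space)
qed

lemma sets_not_covered: "{\<omega>. \<not> all_covered m \<omega> n} \<in> sets (throws P)"
proof -
  have "Measurable.pred (throws P) (\<lambda>\<omega>. \<not> all_covered m \<omega> n)"
    unfolding all_covered_def by measurable
  then show ?thesis
    by (simp add: pred_def space_stream_space)
qed

lemma emeasure_urn_empty:
  "emeasure (throws P) {\<omega>. \<forall>k<n. \<omega> !! k \<noteq> i} = ennreal ((1 - pmf P i) ^ n)"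
proof (induction n)
  case 0
  interpret prob_space "throws P"
    by (rule prob_space_throws)
  show ?case
    using emeasure_space_1 by (simp add: space_stream_space)
next
  case (Suc n)
  have miss: "emeasure (measure_pmf P) (UNIV - {i}) = ennreal (1 - pmf P i)"
    using measure_pmf.prob_compl[of "{i}" P]
    by (simp add: measure_pmf.emeasure_eq_measure measure_pmf_single)
  have first_throw: "{\<omega> \<in> space (throws P). t ## \<omega> \<in> {\<omega>. \<forall>k<Suc n. \<omega> !! k \<noteq> i}}
      = (if t = i then {} else {\<omega>. \<forall>k<n. \<omega> !! k \<noteq> i})" for t
    by (auto simp: space_stream_space All_less_Suc2)
  have "emeasure (throws P) {\<omega>. \<forall>k<Suc n. \<omega> !! k \<noteq> i}
      = (\<integral>\<^sup>+t. emeasure (throws P)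
           {\<omega> \<in> space (throws P). t ## \<omega> \<in> {\<omega>. \<forall>k<Suc n. \<omega> !! k \<noteq> i}} \<partial>measure_pmf P)"
    by (rule prob_space.emeasure_stream_space[OF prob_space_measure_pmf sets_urn_empty])
  also have "\<dots> = (\<integral>\<^sup>+t. indicator (UNIV - {i}) t * ennreal ((1 - pmf P i) ^ n) \<partial>measure_pmf P)"
    unfolding first_throw using Suc by (intro nn_integral_cong) simp
  also have "\<dots> = ennreal (1 - pmf P i) * ennreal ((1 - pmf P i) ^ n)"
    by (simp add: nn_integral_multc miss)
  also have "\<dots> = ennreal ((1 - pmf P i) ^ Suc n)"
    by (simp add: ennreal_mult[symmetric] pmf_le_1)
  finally show ?case .
qed

lemma all_covered_mono: "all_covered m \<omega> n \<Longrightarrow> n \<le> n' \<Longrightarrow> all_covered m \<omega> n'"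
  unfolding all_covered_def by (meson less_le_trans)

lemma cover_time_eq_suminf: "cover_time m \<omega> = (\<Sum>n. indicator {\<omega>. \<not> all_covered m \<omega> n} \<omega>)"
proof (cases "\<exists>n. all_covered m \<omega> n")
  case True
  define L where "L = (LEAST n. all_covered m \<omega> n)"
  have "all_covered m \<omega> L"
    unfolding L_def using True by (rule LeastI_ex)
  then have "indicator {\<omega>. \<not> all_covered m \<omega> n} \<omega> = (if n \<in> {..<L} then 1 else (0::ennreal))" for n
    using not_less_Least[of n "all_covered m \<omega>"] all_covered_mono[of m \<omega> L n]
    by (auto simp: indicator_def L_def)
  then have "(\<Sum>n. indicator {\<omega>. \<not> all_covered m \<omega> n} \<omega>) = (\<Sum>n<L. (1::ennreal))"
    by (subst suminf_finite[of "{..<L}"]) auto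
  then show ?thesis
    using True by (simp add: cover_time_def L_def)
next
  case False
  then show ?thesis
    by (simp add: cover_time_def suminf_eq_SUP ennreal_SUP_of_nat_eq_top)
qed

lemma expected_cover_time_eq_suminf:
  "expected_cover_time m P = (\<Sum>n. emeasure (throws P) {\<omega>. \<not> all_covered m \<omega> n})"
proof -
  have "expected_cover_time m P
      = (\<integral>\<^sup>+\<omega>. (\<Sum>n. indicator {\<omega>. \<not> all_covered m \<omega> n} \<omega>) \<partial>throws P)"
    unfolding expected_cover_time_def cover_time_eq_suminf ..
  also have "\<dots> = (\<Sum>n. \<integral>\<^sup>+\<omega>. indicator {\<omega>. \<not> all_covered m \<omega> n} \<omega> \<partial>throws P)"
    using sets_not_covered by (intro nn_integral_suminf) auto
  finally show ?thesis
    using sets_not_covered by simp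
qed

lemma expected_cover_time_ge:
  assumes "i < m"
  shows "ennreal (1 / pmf P i) \<le> expected_cover_time m P"
proof (cases "pmf P i = 0")
  case False
  then have q: "0 \<le> 1 - pmf P i" "1 - pmf P i < 1"
    using pmf_le_1[of P i] by (auto simp: pmf_nonneg order.strict_iff_order)
  have "ennreal (1 / pmf P i) = (\<Sum>n. ennreal ((1 - pmf P i) ^ n))"
    using q by (simp add: suminf_ennreal2 suminf_geometric)
  also have "\<dots> \<le> (\<Sum>n. emeasure (throws P) {\<omega>. \<not> all_covered m \<omega> n})"
  proof (intro suminf_le summableI)
    fix n
    have "{\<omega>. \<forall>k<n. \<omega> !! k \<noteq> i} \<subseteq> {\<omega>. \<not> all_covered m \<omega> n}"
      using assms by (auto simp: all_covered_def)
    then show "ennreal ((1 - pmf P i) ^ n) \<le> emeasure (throws P) {\<omega>. \<not> all_covered m \<omega> n}"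
      unfolding emeasure_urn_empty[symmetric] by (intro emeasure_mono sets_not_covered)
  qed
  finally show ?thesis
    by (simp add: expected_cover_time_eq_suminf)
qed simp

lemma emeasure_not_covered_le:
  assumes "\<forall>i<m. p \<le> pmf P i"
  shows "emeasure (throws P) {\<omega>. \<not> all_covered m \<omega> n} \<le> ennreal (real m * (1 - p) ^ n)"
proof -
  have p: "m \<noteq> 0 \<Longrightarrow> 0 \<le> 1 - p"
    using assms pmf_le_1[of P 0] by auto
  have "emeasure (throws P) {\<omega>. \<not> all_covered m \<omega> n}
      \<le> emeasure (throws P) (\<Union>i<m. {\<omega>. \<forall>k<n. \<omega> !! k \<noteq> i})"
    by (intro emeasure_mono) (auto simp: all_covered_def intro: sets_urn_empty)
  also have "\<dots> \<le> (\<Sum>i<m. emeasure (throws P) {\<omega>. \<forall>k<n. \<omega> !! k \<noteq> i})"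
    by (intro emeasure_subadditive_finite) (auto intro: sets_urn_empty)
  also have "\<dots> \<le> (\<Sum>i<m. ennreal ((1 - p) ^ n))"
    unfolding emeasure_urn_empty
    using assms pmf_le_1 by (intro sum_mono ennreal_leI power_mono) auto
  also have "\<dots> = ennreal (real m * (1 - p) ^ n)"
    using p by (cases "m = 0") (simp_all add: ennreal_of_nat_eq_real_of_nat ennreal_mult)
  finally show ?thesis .
qed

lemma delayed_geometric_sums:
  fixes q :: real
  assumes "\<bar>q\<bar> < 1"
  shows "(\<lambda>n. if n < N then 1 else q ^ (n - N)) sums (real N + 1 / (1 - q))"
  using sums_iff_shift[of "\<lambda>n. if n < N then 1 else q ^ (n - N)" N] geometric_sums[of q] assms
  by (simp add: add.commute)

lemma expected_cover_time_le:
  assumes p: "0 < p" "\<forall>i<m. p \<le> pmf P i"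
      and horizon: "real m * (1 - p) ^ N \<le> 1"
  shows "expected_cover_time m P \<le> ennreal (real N + 1 / p)"
proof (cases "m = 0")
  case True
  then show ?thesis
    by (simp add: expected_cover_time_eq_suminf all_covered_def)
next
  case False
  then have q: "0 \<le> 1 - p" "1 - p < 1"
    using p pmf_le_1[of P 0] by auto
  define b where "b n = (if n < N then 1 else (1 - p) ^ (n - N))" for n
  have b: "b sums (real N + 1 / p)"
    using delayed_geometric_sums[of "1 - p" N] q unfolding b_def by simp
  have "emeasure (throws P) {\<omega>. \<not> all_covered m \<omega> n} \<le> ennreal (b n)" for n
  proof (cases "n < N")
    case True
    interpret prob_space "throws P"
      by (rule prob_space_throws)
    show ?thesis
      using True emeasure_le_1 by (simp add: b_def)
  next
    case False
    have "real m * (1 - p) ^ n = real m * (1 - p) ^ N * (1 - p) ^ (n - N)"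
      using False by (simp flip: power_add)
    also have "\<dots> \<le> b n"
      using False horizon q by (simp add: b_def mult_left_le_one_le)
    finally show ?thesis
      using emeasure_not_covered_le[OF p(2), of n] order.trans ennreal_leI by blast
  qed
  then have "expected_cover_time m P \<le> (\<Sum>n. ennreal (b n))"
    unfolding expected_cover_time_eq_suminf by (intro suminf_le summableI)
  also have "\<dots> = ennreal (\<Sum>n. b n)"
    using q by (intro suminf_ennreal2 sums_summable[OF b]) (simp add: b_def)
  also have "\<dots> = ennreal (real N + 1 / p)"
    using b by (simp add: sums_unique[symmetric])
  finally show ?thesis .
qed

lemma two_le_ln: "9 \<le> x \<Longrightarrow> 2 \<le> ln (x::real)"
proof -
  assume "9 \<le> x"
  have "exp 2 = exp 1 * exp (1::real)"
    by (simp flip: exp_add)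
  also have "\<dots> \<le> 3 * 3"
    using exp_le by (intro mult_mono) auto
  finally show ?thesis
    using \<open>9 \<le> x\<close> by (simp add: ln_ge_iff)
qed

lemma cover_horizon_exists:
  assumes p: "0 < p" "p \<le> 1" and m: "9 \<le> m"
  obtains N where "real m * (1 - p) ^ N \<le> 1" "real N + 1 / p \<le> 2 * harm m / p"
proof
  define N where "N = nat \<lceil>ln (real m) / p\<rceil>"
  have ln_m: "2 \<le> ln (real m)" "ln (real m) \<le> harm m"
    using two_le_ln[of "real m"] order.trans[OF _ ln_le_harm[of m]] m by auto
  have N: "ln (real m) / p \<le> real N" "real N \<le> ln (real m) / p + 1"
    using ln_m p by (auto simp: N_def)
  have "(1 - p) ^ N \<le> exp (- p) ^ N"
    using p exp_ge_add_one_self[of "-p"] by (intro power_mono) auto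
  also have "\<dots> = exp (- (real N * p))"
    by (simp flip: exp_of_nat_mult)
  also have "\<dots> \<le> exp (- ln (real m))"
    using N p by (simp add: field_simps)
  finally show "real m * (1 - p) ^ N \<le> 1"
    using m by (simp add: exp_minus field_simps)
  have "(ln (real m) + 2) / p = ln (real m) / p + 2 * (1 / p)" "1 \<le> 1 / p"
    using p by (simp_all add: add_divide_distrib)
  then have "real N + 1 / p \<le> (ln (real m) + 2) / p"
    using N by linarith
  also have "\<dots> \<le> 2 * harm m / p"
    using ln_m p by (intro divide_right_mono) auto
  finally show "real N + 1 / p \<le> 2 * harm m / p" .
qed

theorem theorem8:
  "\<exists>M::nat. \<forall>m\<ge>M. \<forall>P :: nat pmf.
     set_pmf P \<subseteq> {..<m} \<and>
     (\<forall>i j. i \<le> j \<and> j < m \<longrightarrow> pmf P i \<le> pmf P j) \<and>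
     pmf P 0 > 0 \<longrightarrow>
       ennreal (1 / pmf P 0) \<le> expected_cover_time m P \<and>
       expected_cover_time m P \<le> ennreal (2 * harm m / pmf P 0)"
proof (intro exI[of _ 9] allI impI conjI)
  fix m :: nat and P :: "nat pmf"
  assume m: "9 \<le> m"
  assume "set_pmf P \<subseteq> {..<m} \<and>
     (\<forall>i j. i \<le> j \<and> j < m \<longrightarrow> pmf P i \<le> pmf P j) \<and> pmf P 0 > 0"
  then have smallest: "\<forall>i<m. pmf P 0 \<le> pmf P i" and p: "0 < pmf P 0"
    by auto
  show "ennreal (1 / pmf P 0) \<le> expected_cover_time m P"
    using m by (intro expected_cover_time_ge) simp
  obtain N where "real m * (1 - pmf P 0) ^ N \<le> 1" "real N + 1 / pmf P 0 \<le> 2 * harm m / pmf P 0"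
    using cover_horizon_exists[OF p pmf_le_1 m] .
  then show "expected_cover_time m P \<le> ennreal (2 * harm m / pmf P 0)"
    using expected_cover_time_le[OF p smallest] order.trans ennreal_leI by blast
qed

end
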